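(* Let $\rho\in(0,1)$, $\phi_1,\phi_2>0$, and assume that $\operatorname{prox}_{G/(\rho\phi_2)}$ is a bijection of $\mathbb{R}^{p\times p}$ onto itself and that $\Omega^*\ne\emptyset$. Let $\omega^*\in\Omega^*$. Then there is a Lebesgue-null set $\Omega_0\subset(\mathbb{R}^{p\times p})^3$ such that for every $\omega_k=(X^{(k)},Y^{(k)},V^{(k)})\notin\Omega^*\cup\Omega_0$ there exist $w_1,w_2\in\mathbb{R}^{p\times p}$ with positive entries and $\alpha,\beta,\gamma\in\mathbb{R}^{p\times p}$ such that \[ \|\widehat{\omega}_{k+1}-\omega^*\|_F<\|\widetilde{\omega}_{k+1}-\omega^*\|_F, \] where $\widetilde{\omega}_{k+1}$ is the LADMM step from $\omega_k$ and $\widehat{\omega}_{k+1}$ is the re-parameterized step from $\omega_k$ with parameters $(w_1,w_2,\alpha,\beta,\gamma)$.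
   Context: $F,G:\mathbb{R}^{p\times p}\to\mathbb{R}\cup\{+\infty\}$ are proper, closed, convex. A KKT point of $\min F(X)+G(Y)$ s.t. $X=Y$ is $(X^*,Y^*,V^* )$ with $X^*=Y^*$, $-V^*\in\partial F(X^* )$, $V^*\in\partial G(Y^* )$; $\Omega^*$ is the KKT set. $\operatorname{prox}_{u\varphi}(V):=\arg\min_U\{\varphi(U)+\tfrac{1}{2u}\|U-V\|_F^2\}$. $\circ$ is the Hadamard product. For a weight matrix $w$ with positive entries, the weighted proximal map is $\operatorname{prox}_{w,F}(M):=\arg\min_X\{F(X)+\tfrac12\|\tfrac{1}{\sqrt{w}}\circ(X-M)\|_F^2\}$ (entrywise reciprocal/square root), similarly for $G$. LADMM step: $\widetilde\omega_{k+1}=(\widetilde X,\widetilde Y,\widetilde V)$ with $\widetilde X=\operatorname{prox}_{F/(\rho\phi_1)}\big(X^{(k)}-\tfrac{1}{\phi_1}(X^{(k)}-Y^{(k)}+V^{(k)}/\rho)\big)$, $\widetilde Y=\operatorname{prox}_{G/(\rho\phi_2)}\big(Y^{(k)}-\tfrac{1}{\phi_2}(Y^{(k)}-\widetilde X-V^{(k)}/\rho)\big)$, $\widetilde V=V^{(k)}+\rho(\widetilde X-\widetilde Y)$. Re-parameterized step: $\widehat\omega_{k+1}=(\widehat X,\widehat Y,\widehat V)$ with $\widehat X=\operatorname{prox}_{w_1,F}\big(X^{(k)}-\alpha\circ(V^{(k)}+\gamma\circ(X^{(k)}-Y^{(k)}))\big)$, $\widehat Y=\operatorname{prox}_{w_2,G}\big(Y^{(k)}+\beta\circ(V^{(k)}+\gamma\circ(\widehat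 X-Y^{(k)}))\big)$, $\widehat V=V^{(k)}+\gamma\circ(\widehat X-\widehat Y)$. For triples, $\|\omega\|_F^2=\|X\|_F^2+\|Y\|_F^2+\|V\|_F^2$. *)

theory Defs
  imports "HOL-Analysis.Analysis" "HOL-Library.Extended_Real"
begin

text \<open>p x p real matrices; the HOL-Analysis norm on real^'p^'p is the Frobenius norm,
  inner is the Frobenius inner product, and on triples (nested pairs) the norm is
  sqrt(|X|^2+|Y|^2+|V|^2).\<close>
type_synonym 'p mat = "real^'p^'p"

definition epigraph_e :: "('a \<Rightarrow> ereal) \<Rightarrow> ('a \<times> real) set" where
  "epigraph_e f = {(x, r). f x \<le> ereal r}"

definition proper_fn :: "('a \<Rightarrow> ereal) \<Rightarrow> bool" where
  "proper_fn f \<longleftrightarrow> (\<forall>x. f x \<noteq> -\<infinity>) \<and> (\<exists>x. f x < \<infinity>)"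

definition closed_fn :: "('a::topological_space \<Rightarrow> ereal) \<Rightarrow> bool" where
  "closed_fn f \<longleftrightarrow> closed (epigraph_e f)"

definition convex_fn :: "('a::real_vector \<Rightarrow> ereal) \<Rightarrow> bool" where
  "convex_fn f \<longleftrightarrow> convex (epigraph_e f)"

definition subdiff :: "('a::real_inner \<Rightarrow> ereal) \<Rightarrow> 'a \<Rightarrow> 'a set" where
  "subdiff f x = {v. f x < \<infinity> \<and> (\<forall>y. f x + ereal (inner v (y - x)) \<le> f y)}"

definition KKT_set :: "('p::finite mat \<Rightarrow> ereal) \<Rightarrow> ('p mat \<Rightarrow> ereal) \<Rightarrow> ('p mat \<times> 'p mat \<times> 'p mat) set" where
  "KKT_set F G = {(X, Y, V). X = Y \<and> - V \<in> subdiff F X \<and> V \<in> subdiff G Y}"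

text \<open>Unique minimiser (argmin), as the paper's prox notation presupposes.\<close>
definition argmin_e :: "('a \<Rightarrow> ereal) \<Rightarrow> 'a" where
  "argmin_e h = (THE u. \<forall>v. h u \<le> h v)"

definition prox :: "real \<Rightarrow> ('p::finite mat \<Rightarrow> ereal) \<Rightarrow> 'p mat \<Rightarrow> 'p mat" where
  "prox u \<phi> V = argmin_e (\<lambda>U. \<phi> U + ereal (1 / (2 * u) * (norm (U - V))\<^sup>2))"

definition hadamard :: "'p::finite mat \<Rightarrow> 'p mat \<Rightarrow> 'p mat" (infixl "\<circ>\<^sub>H" 70) where
  "A \<circ>\<^sub>H B = (\<chi> i j. A $ i $ j * B $ i $ j)"

definition wprox :: "'p::finite mat \<Rightarrow> ('p mat \<Rightarrow> ereal) \<Rightarrow> 'p mat \<Rightarrow> 'p mat" where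
  "wprox w \<phi> M = argmin_e (\<lambda>X. \<phi> X +
      ereal (1 / 2 * (norm ((\<chi> i j. 1 / sqrt (w $ i $ j)) \<circ>\<^sub>H (X - M)))\<^sup>2))"

definition ladmm_step :: "('p::finite mat \<Rightarrow> ereal) \<Rightarrow> ('p mat \<Rightarrow> ereal) \<Rightarrow> real \<Rightarrow> real \<Rightarrow> real
    \<Rightarrow> 'p mat \<times> 'p mat \<times> 'p mat \<Rightarrow> 'p mat \<times> 'p mat \<times> 'p mat" where
  "ladmm_step F G \<rho> \<phi>1 \<phi>2 \<omega> = (case \<omega> of (X, Y, V) \<Rightarrow>
     let Xt = prox (1 / (\<rho> * \<phi>1)) F (X - (1 / \<phi>1) *\<^sub>R (X - Y + (1 / \<rho>) *\<^sub>R V));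
         Yt = prox (1 / (\<rho> * \<phi>2)) G (Y - (1 / \<phi>2) *\<^sub>R (Y - Xt - (1 / \<rho>) *\<^sub>R V));
         Vt = V + \<rho> *\<^sub>R (Xt - Yt)
     in (Xt, Yt, Vt))"

definition reparam_step :: "('p::finite mat \<Rightarrow> ereal) \<Rightarrow> ('p mat \<Rightarrow> ereal) \<Rightarrow> 'p mat \<Rightarrow> 'p mat
    \<Rightarrow> 'p mat \<Rightarrow> 'p mat \<Rightarrow> 'p mat
    \<Rightarrow> 'p mat \<times> 'p mat \<times> 'p mat \<Rightarrow> 'p mat \<times> 'p mat \<times> 'p mat" where
  "reparam_step F G w1 w2 \<alpha> \<beta> \<gamma> \<omega> = (case \<omega> of (X, Y, V) \<Rightarrow>
     let Xh = wprox w1 F (X - \<alpha> \<circ>\<^sub>H (V + \<gamma> \<circ>\<^sub>H (X - Y)));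
         Yh = wprox w2 G (Y + \<beta> \<circ>\<^sub>H (V + \<gamma> \<circ>\<^sub>H (Xh - Y)));
         Vh = V + \<gamma> \<circ>\<^sub>H (Xh - Yh)
     in (Xh, Yh, Vh))"

end

theory Submission
  imports Defs
begin

text \<open>The re-parameterized step has entrywise free step sizes, so from almost every iterate it can
  be steered arbitrarily close to the KKT point \<open>(X*, X*, V*)\<close>. Its first block is made to
  evaluate the prox of \<open>F\<close> at \<open>X* - V*\<close>, which returns \<open>X*\<close> because \<open>-V* \<in> \<partial>F(X*)\<close>; by
  surjectivity of the prox of \<open>G\<close>, the second block can return \<open>X* + t\<one>\<close> for any \<open>t > 0\<close>; and
  \<open>\<gamma> = (V - V*)/t\<close> makes the dual update land exactly on \<open>V*\<close>. The entrywise divisions this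
  needs are possible unless \<open>V\<close> has a zero entry (a null set of iterates) or \<open>t\<close> is one of
  finitely many exceptional values. The LADMM step, on the other hand, leaves the dual variable
  unchanged whenever it lands on a KKT point, so it stays at positive distance from \<open>\<omega>*\<close> unless
  \<open>V\<close> shares an entry with \<open>V*\<close>, again a null set.\<close>

lemma argmin_e_eqI:
  assumes "\<And>v. v \<noteq> u \<Longrightarrow> h u < h v"
  shows "argmin_e h = u"
  unfolding argmin_e_def
proof (rule the_equality)
  show "\<forall>v. h u \<le> h v" using assms by (metis order.order_iff_strict order_refl)
next
  fix u' assume "\<forall>v. h u' \<le> h v"
  then show "u' = u" using assms by (metis leD)
qed

lemma prox_subgradient_step:
  assumes "\<And>U. F U \<noteq> -\<infinity>" and "- V \<in> subdiff F X" and "0 < u"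
  shows "prox u F (X - u *\<^sub>R V) = X"
  unfolding prox_def
proof (rule argmin_e_eqI)
  fix U assume "U \<noteq> X"
  then have dist_pos: "0 < (norm (U - X))\<^sup>2 / (2 * u)" using \<open>0 < u\<close> by simp
  from \<open>- V \<in> subdiff F X\<close> have "F X < \<infinity>" and subgrad: "F X + ereal (inner (-V) (U - X)) \<le> F U"
    unfolding subdiff_def by auto
  then obtain f where f: "F X = ereal f" using assms(1)[of X] by (cases "F X") auto
  have expand: "1 / (2 * u) * (norm (U - (X - u *\<^sub>R V)))\<^sup>2
      = (norm (U - X))\<^sup>2 / (2 * u) + inner V (U - X) + u / 2 * (norm V)\<^sup>2"
  proof -
    have "U - (X - u *\<^sub>R V) = (U - X) + u *\<^sub>R V" by simp
    then have "(norm (U - (X - u *\<^sub>R V)))\<^sup>2 = (norm (U - X))\<^sup>2 + 2 * u * inner V (U - X) + u\<^sup>2 * (norm V)\<^sup>2"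
      by (simp only: power2_norm_eq_inner inner_add_left inner_add_right inner_scaleR_left
          inner_scaleR_right inner_commute[of "U - X" V]) (simp add: power2_eq_square algebra_simps)
    then show ?thesis using \<open>0 < u\<close> by (simp add: field_simps power2_eq_square)
  qed
  have at_X: "1 / (2 * u) * (norm (X - (X - u *\<^sub>R V)))\<^sup>2 = u / 2 * (norm V)\<^sup>2"
    using \<open>0 < u\<close> by (simp add: power2_eq_square)
  show "F X + ereal (1 / (2 * u) * (norm (X - (X - u *\<^sub>R V)))\<^sup>2)
      < F U + ereal (1 / (2 * u) * (norm (U - (X - u *\<^sub>R V)))\<^sup>2)"
  proof (cases "F U")
    case (real g)
    with subgrad f have "f - inner V (U - X) \<le> g" by simp
    then show ?thesis using f real expand dist_pos at_X by simp
  qed (use f assms(1)[of U] in auto)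
qed

lemma hadamard_scaleR_left: "(c *\<^sub>R A) \<circ>\<^sub>H B = c *\<^sub>R (A \<circ>\<^sub>H B)"
  by (simp add: hadamard_def vec_eq_iff)

lemma hadamard_quotient_cancel:
  assumes "\<And>i j. S $ i $ j \<noteq> 0"
  shows "(\<chi> i j. A $ i $ j / S $ i $ j) \<circ>\<^sub>H S = A"
  using assms by (simp add: hadamard_def vec_eq_iff)

lemma wprox_const:
  assumes "0 < u"
  shows "wprox (\<chi> i j. u) G M = prox u G M"
proof -
  have "(\<chi> i j. 1 / sqrt u) \<circ>\<^sub>H (X - M) = (1 / sqrt u) *\<^sub>R (X - M)" for X :: "'a::finite mat"
    by (simp add: hadamard_def vec_eq_iff)
  then have "1 / 2 * (norm ((\<chi> i j. 1 / sqrt u) \<circ>\<^sub>H (X - M)))\<^sup>2 = 1 / (2 * u) * (norm (X - M))\<^sup>2"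
    for X :: "'a mat"
    using assms by (simp add: power_divide)
  then show ?thesis unfolding wprox_def prox_def by simp
qed

lemma reparam_step_reaches:
  fixes F G :: "'p::finite mat \<Rightarrow> ereal"
  assumes "\<And>U. F U \<noteq> -\<infinity>" and "- Vs \<in> subdiff F Xs"
    and "0 < u" and "prox u G N = Z"
    and dual: "V + \<gamma> \<circ>\<^sub>H (Xs - Z) = Vs"
    and S: "\<And>i j. (V + \<gamma> \<circ>\<^sub>H (X - Y)) $ i $ j \<noteq> 0"
    and T: "\<And>i j. (V + \<gamma> \<circ>\<^sub>H (Xs - Y)) $ i $ j \<noteq> 0"
  shows "\<exists>w1 w2 \<alpha> \<beta>. (\<forall>i j. 0 < w1 $ i $ j) \<and> (\<forall>i j. 0 < w2 $ i $ j) \<and>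
           reparam_step F G w1 w2 \<alpha> \<beta> \<gamma> (X, Y, V) = (Xs, Z, Vs)"
proof -
  define \<alpha> :: "'p mat" where "\<alpha> = (\<chi> i j. (X - (Xs - Vs)) $ i $ j / (V + \<gamma> \<circ>\<^sub>H (X - Y)) $ i $ j)"
  define \<beta> :: "'p mat" where "\<beta> = (\<chi> i j. (N - Y) $ i $ j / (V + \<gamma> \<circ>\<^sub>H (Xs - Y)) $ i $ j)"
  have "X - \<alpha> \<circ>\<^sub>H (V + \<gamma> \<circ>\<^sub>H (X - Y)) = Xs - 1 *\<^sub>R Vs"
    unfolding \<alpha>_def hadamard_quotient_cancel[OF S] by simp
  then have X_step: "wprox (\<chi> i j. 1) F (X - \<alpha> \<circ>\<^sub>H (V + \<gamma> \<circ>\<^sub>H (X - Y))) = Xs"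
    using prox_subgradient_step[OF assms(1,2), of 1] by (simp add: wprox_const)
  have "Y + \<beta> \<circ>\<^sub>H (V + \<gamma> \<circ>\<^sub>H (Xs - Y)) = N"
    unfolding \<beta>_def hadamard_quotient_cancel[OF T] by simp
  then have Y_step: "wprox (\<chi> i j. u) G (Y + \<beta> \<circ>\<^sub>H (V + \<gamma> \<circ>\<^sub>H (Xs - Y))) = Z"
    using assms(3,4) by (simp add: wprox_const)
  have "reparam_step F G (\<chi> i j. 1) (\<chi> i j. u) \<alpha> \<beta> \<gamma> (X, Y, V) = (Xs, Z, Vs)"
    unfolding reparam_step_def Let_def using X_step Y_step dual by simp
  moreover have "\<forall>i j. 0 < (\<chi> i j. c :: 'p mat) $ i $ j" if "0 < c" for c
    using that by simp
  ultimately show ?thesis using \<open>0 < u\<close> zero_less_one by blast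
qed

lemma exists_small_step_avoiding_zeros:
  fixes V W :: "'p::finite mat"
  assumes "\<And>i j. V $ i $ j \<noteq> 0" and "finite \<A>" and "0 < \<epsilon>"
  shows "\<exists>t. 0 < t \<and> t < \<epsilon> \<and> (\<forall>A\<in>\<A>. \<forall>i j. (V + (1 / t) *\<^sub>R (W \<circ>\<^sub>H A)) $ i $ j \<noteq> 0)"
proof -
  define B where "B = (\<lambda>(A, i, j). - (W \<circ>\<^sub>H A) $ i $ j / V $ i $ j) ` (\<A> \<times> UNIV \<times> UNIV)"
  have "finite B" unfolding B_def using assms(2) by simp
  moreover have "infinite {0<..<\<epsilon>}" using assms(3) by simp
  ultimately obtain t where t: "t \<in> {0<..<\<epsilon>}" "t \<notin> B"
    by (metis Diff_iff Diff_infinite_finite finite.emptyI ex_in_conv)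
  have "(V + (1 / t) *\<^sub>R (W \<circ>\<^sub>H A)) $ i $ j \<noteq> 0" if "A \<in> \<A>" for A i j
  proof
    assume "(V + (1 / t) *\<^sub>R (W \<circ>\<^sub>H A)) $ i $ j = 0"
    then have "t = - (W \<circ>\<^sub>H A) $ i $ j / V $ i $ j"
      using t(1) assms(1)[of i j] by (simp add: field_simps)
    then have "t \<in> B" unfolding B_def using that by (auto intro: rev_image_eqI[of "(A, i, j)"])
    with t(2) show False by contradiction
  qed
  then show ?thesis using t(1) by auto
qed

lemma reparam_step_approaches_KKT_point:
  fixes F G :: "'p::finite mat \<Rightarrow> ereal"
  assumes "\<And>U. F U \<noteq> -\<infinity>" and "- Vs \<in> subdiff F Xs"
    and "0 < u" and "surj (prox u G)"
    and "\<And>i j. V $ i $ j \<noteq> 0" and "0 < \<epsilon>"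
  shows "\<exists>w1 w2 \<alpha> \<beta> \<gamma>. (\<forall>i j. 0 < w1 $ i $ j) \<and> (\<forall>i j. 0 < w2 $ i $ j) \<and>
           norm (reparam_step F G w1 w2 \<alpha> \<beta> \<gamma> (X, Y, V) - (Xs, Xs, Vs)) < \<epsilon>"
proof -
  define one :: "'p mat" where "one = (\<chi> i j. 1)"
  have "one \<noteq> 0" unfolding one_def by (metis vec_lambda_beta zero_index zero_neq_one)
  then have one_pos: "0 < norm one" by simp
  obtain t where "0 < t" and "t < \<epsilon> / norm one"
    and nonzero: "\<forall>A\<in>{X - Y, Xs - Y}. \<forall>i j. (V + (1 / t) *\<^sub>R ((V - Vs) \<circ>\<^sub>H A)) $ i $ j \<noteq> 0"
    using exists_small_step_avoiding_zeros[OF assms(5), where W = "V - Vs" and \<A> = "{X - Y, Xs - Y}"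
        and \<epsilon> = "\<epsilon> / norm one"]
      assms(6) one_pos by auto
  define \<gamma> where "\<gamma> = (1 / t) *\<^sub>R (V - Vs)"
  obtain N where N: "prox u G N = Xs + t *\<^sub>R one" using assms(4) by (metis surjD)
  have dual: "V + \<gamma> \<circ>\<^sub>H (Xs - (Xs + t *\<^sub>R one)) = Vs"
    using \<open>0 < t\<close> unfolding \<gamma>_def one_def hadamard_def by (simp add: vec_eq_iff)
  have "\<forall>A\<in>{X - Y, Xs - Y}. \<forall>i j. (V + \<gamma> \<circ>\<^sub>H A) $ i $ j \<noteq> 0"
    using nonzero unfolding \<gamma>_def hadamard_scaleR_left .
  then obtain w1 w2 \<alpha> \<beta> where w: "\<forall>i j. 0 < w1 $ i $ j" "\<forall>i j. 0 < w2 $ i $ j"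
    and step: "reparam_step F G w1 w2 \<alpha> \<beta> \<gamma> (X, Y, V) = (Xs, Xs + t *\<^sub>R one, Vs)"
    using reparam_step_reaches[OF assms(1-3) N dual] by blast
  have "norm (reparam_step F G w1 w2 \<alpha> \<beta> \<gamma> (X, Y, V) - (Xs, Xs, Vs)) = t * norm one"
    unfolding step using \<open>0 < t\<close> by (simp add: norm_Pair)
  also have "\<dots> < \<epsilon>" using \<open>t < \<epsilon> / norm one\<close> one_pos by (simp add: pos_less_divide_eq)
  finally show ?thesis using w by blast
qed

lemma null_sets_dual_entry_in:
  assumes "\<And>i j. finite (C i j)"
  shows "{\<omega> :: 'p::finite mat \<times> 'p mat \<times> 'p mat. \<exists>i j. snd (snd \<omega>) $ i $ j \<in> C i j}
    \<in> null_sets lebesgue"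
proof -
  have hyperplane: "negligible {\<omega> :: 'p mat \<times> 'p mat \<times> 'p mat. snd (snd \<omega>) $ i $ j = c}" for i j c
  proof -
    have "negligible {\<omega> :: 'p mat \<times> 'p mat \<times> 'p mat. inner (0, 0, axis i (axis j 1)) \<omega> = c}"
      by (rule negligible_hyperplane) (simp add: zero_prod_def axis_eq_0_iff)
    moreover have "inner (0, 0, axis i (axis j 1)) \<omega> = snd (snd \<omega>) $ i $ j"
      for \<omega> :: "'p mat \<times> 'p mat \<times> 'p mat"
      by (cases \<omega>) (simp add: inner_axis')
    ultimately show ?thesis by simp
  qed
  have "{\<omega> :: 'p mat \<times> 'p mat \<times> 'p mat. \<exists>i j. snd (snd \<omega>) $ i $ j \<in> C i j}
      = (\<Union>i j. \<Union>c \<in> C i j. {\<omega>. snd (snd \<omega>) $ i $ j = c})"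
    by auto
  also have "negligible \<dots>"
    using assms by (auto intro!: negligible_Union hyperplane)
  finally show ?thesis by (simp add: negligible_iff_null_sets)
qed

lemma ladmm_step_dist_KKT_pos:
  assumes "V \<noteq> W"
  shows "0 < norm (ladmm_step F G \<rho> \<phi>1 \<phi>2 (X, Y, V) - (Z, Z, W))"
proof -
  have "ladmm_step F G \<rho> \<phi>1 \<phi>2 (X, Y, V) \<noteq> (Z, Z, W)"
    using assms unfolding ladmm_step_def Let_def by auto
  then show ?thesis by simp
qed

theorem theorem5:
  fixes F G :: "'p::finite mat \<Rightarrow> ereal"
    and \<rho> \<phi>1 \<phi>2 :: real
    and \<omega>s :: "'p mat \<times> 'p mat \<times> 'p mat"
  assumes "proper_fn F" "closed_fn F" "convex_fn F"
    and "proper_fn G" "closed_fn G" "convex_fn G"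
    and "0 < \<rho>" "\<rho> < 1" "0 < \<phi>1" "0 < \<phi>2"
    and "bij (prox (1 / (\<rho> * \<phi>2)) G)"
    and "KKT_set F G \<noteq> {}"
    and "\<omega>s \<in> KKT_set F G"
  shows "\<exists>\<Omega>0 :: ('p mat \<times> 'p mat \<times> 'p mat) set. \<Omega>0 \<in> null_sets lebesgue \<and>
           (\<forall>\<omega>. \<omega> \<notin> KKT_set F G \<union> \<Omega>0 \<longrightarrow>
              (\<exists>w1 w2 \<alpha> \<beta> \<gamma>. (\<forall>i j. 0 < w1 $ i $ j) \<and> (\<forall>i j. 0 < w2 $ i $ j) \<and>
                 norm (reparam_step F G w1 w2 \<alpha> \<beta> \<gamma> \<omega> - \<omega>s)
                   < norm (ladmm_step F G \<rho> \<phi>1 \<phi>2 \<omega> - \<omega>s)))"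
proof -
  obtain Xs Vs where \<omega>s: "\<omega>s = (Xs, Xs, Vs)" and subgrad: "- Vs \<in> subdiff F Xs"
    using assms(13) unfolding KKT_set_def by auto
  have F_finite_below: "\<And>U. F U \<noteq> -\<infinity>" using assms(1) unfolding proper_fn_def by auto
  have "0 < 1 / (\<rho> * \<phi>2)" using assms(7,10) by simp
  note approach = reparam_step_approaches_KKT_point[OF F_finite_below subgrad this bij_is_surj[OF assms(11)]]
  define \<Omega>0 where "\<Omega>0 = {\<omega> :: 'p mat \<times> 'p mat \<times> 'p mat. \<exists>i j. snd (snd \<omega>) $ i $ j \<in> {0, Vs $ i $ j}}"
  have "\<Omega>0 \<in> null_sets lebesgue" unfolding \<Omega>0_def by (rule null_sets_dual_entry_in) simp
  moreover have "\<exists>w1 w2 \<alpha> \<beta> \<gamma>. (\<forall>i j. 0 < w1 $ i $ j) \<and> (\<forall>i j. 0 < w2 $ i $ j) \<and>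
                 norm (reparam_step F G w1 w2 \<alpha> \<beta> \<gamma> \<omega> - \<omega>s)
                   < norm (ladmm_step F G \<rho> \<phi>1 \<phi>2 \<omega> - \<omega>s)" if "\<omega> \<notin> \<Omega>0" for \<omega>
  proof -
    obtain X Y V where \<omega>: "\<omega> = (X, Y, V)" by (cases \<omega>)
    have V_nonzero: "\<And>i j. V $ i $ j \<noteq> 0" using that unfolding \<Omega>0_def \<omega> by auto
    have "V \<noteq> Vs"
    proof
      assume "V = Vs"
      then have "\<omega> \<in> \<Omega>0" unfolding \<Omega>0_def \<omega> by simp
      with that show False by contradiction
    qed
    from approach[OF V_nonzero ladmm_step_dist_KKT_pos[OF this]] show ?thesis unfolding \<omega> \<omega>s .
  qed
  ultimately show ?thesis by (metis UnCI)
qed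

end
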